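(* Let $\mathbf{X}\sim\mathcal{MSP}(\boldsymbol{\mu},\mathbf{K})$ be a $p$-variate $L^2$-continuous process on a compact interval $\mathcal{T}=\mathcal{T}_1\cup\dots\cup\mathcal{T}_d$ (pairwise disjoint subintervals), let $(\pi_i,\boldsymbol{\psi}_i)$, $i=1,\dots,M$, be the $M$ largest eigenpairs of its covariance operator with $\pi_M>0$, and write $\psi_{i,k}=\boldsymbol{\psi}_i'\mathbf{e}_k$ for the $k$th component of $\boldsymbol{\psi}_i$. For a set $Q\subseteq\{1,\dots,p\}\times\{1,\dots,d\}$ of (coordinate, interval) cells define $\hat{\mathbf{X}}^{Q}$ by $\hat X^{Q}_j(t)=X_j(t)$ if $t\in\mathcal{T}_b$ with $(j,b)\in Q$, and $\hat X^Q_j(t)=\mu_j(t)$ otherwise. Let $\Theta_{k,\mathcal{T}_a}(\mathbf{X},\boldsymbol{\mu};\mathbf{K},M)$ be the Shapley value of the cell $(k,a)$ in the cooperative game on the $pd$ players $\{1,\dots,p\}\times\{1,\dots,d\}$ with value function $v(Q)=\mathrm{fMMD}^2(\hat{\mathbf{X}}^Q,\boldsymbol{\mu};\mathbf{K},M)$, i.e. $$\Theta_{k,\mathcal{T}_a}=\sum_{Q\subseteq(\{1,..,p\}\times\{1,..,d\})\setminus\{(k,a)\}}\frac{|Q|!(pd-|Q|-1)!}{(pd)!}\big[v(Q\cup\{(k,a)\})-v(Q)\big].$$ Then $$\Theta_{k,\mathcal{T}_a}(\mathbf{X},\boldsymbol{\mu};\mathbf{K},M)=\sum_{i=1}^M\frac{1}{\pi_i}\langle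 X_k-\mu_k,\psi_{i,k}\rangle_{\mathcal{T}_a}\langle\mathbf{X}-\boldsymbol{\mu},\boldsymbol{\psi}_i\rangle.$$
   Context: $\mathcal{H}=L^2(\mathcal{T})^p$ with $\langle\mathbf{x},\mathbf{y}\rangle=\sum_j\int_{\mathcal{T}}x_jy_j$; for scalar functions $\langle f,g\rangle_{\mathcal{T}_a}=\int_{\mathcal{T}_a}fg$. $\mathbf{X}\sim\mathcal{MSP}(\boldsymbol{\mu},\mathbf{K})$ means $\mathbf{X}$ has mean $\boldsymbol{\mu}(t)=E\mathbf{X}(t)$ and covariance kernel $\mathbf{K}(s,t)=[\mathrm{Cov}(X_i(s),X_j(t))]$; the covariance operator is $\mathcal{C}\mathbf{x}(s)=\int\mathbf{K}(s,t)\mathbf{x}(t)dt$ with orthonormal eigenfunctions $\boldsymbol{\psi}_i$ and nonincreasing eigenvalues $\pi_i$. $\mathrm{fMMD}^2(\mathbf{Y},\boldsymbol{\mu};\mathbf{K},M)=\sum_{i=1}^M\pi_i^{-1}\langle\mathbf{Y}-\boldsymbol{\mu},\boldsymbol{\psi}_i\rangle^2$. $\mathbf{e}_k$ is the $k$th canonical basis vector of $\mathbb{R}^p$. *)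

theory Defs
  imports "HOL-Probability.Probability"
begin

text \<open>p-variate functions on the real line are represented as functions
  real => nat => real, the coordinate index j ranging over {1..p}.\<close>

definition innerH :: "real set \<Rightarrow> nat \<Rightarrow> (real \<Rightarrow> nat \<Rightarrow> real) \<Rightarrow> (real \<Rightarrow> nat \<Rightarrow> real) \<Rightarrow> real" where
  "innerH T p x y = (\<Sum>j\<in>{1..p}. LINT t:T|lborel. x t j * y t j)"

definition innerS :: "real set \<Rightarrow> (real \<Rightarrow> real) \<Rightarrow> (real \<Rightarrow> real) \<Rightarrow> real" where
  "innerS A f g = (LINT t:A|lborel. f t * g t)"

definition sqint :: "real set \<Rightarrow> (real \<Rightarrow> real) \<Rightarrow> bool" where
  "sqint A f \<longleftrightarrow> set_borel_measurable lborel A f \<and> set_integrable lborel A (\<lambda>t. (f t)^2)"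

definition inH :: "real set \<Rightarrow> nat \<Rightarrow> (real \<Rightarrow> nat \<Rightarrow> real) \<Rightarrow> bool" where
  "inH T p x \<longleftrightarrow> (\<forall>j\<in>{1..p}. sqint T (\<lambda>t. x t j))"

definition covop :: "real set \<Rightarrow> nat \<Rightarrow> (real \<Rightarrow> real \<Rightarrow> nat \<Rightarrow> nat \<Rightarrow> real) \<Rightarrow> (real \<Rightarrow> nat \<Rightarrow> real) \<Rightarrow> real \<Rightarrow> nat \<Rightarrow> real" where
  "covop T p K x s j = (\<Sum>k\<in>{1..p}. LINT t:T|lborel. K s t j k * x t k)"

definition fMMD2 :: "real set \<Rightarrow> nat \<Rightarrow> (nat \<Rightarrow> real) \<Rightarrow> (nat \<Rightarrow> real \<Rightarrow> nat \<Rightarrow> real) \<Rightarrow> nat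
    \<Rightarrow> (real \<Rightarrow> nat \<Rightarrow> real) \<Rightarrow> (real \<Rightarrow> nat \<Rightarrow> real) \<Rightarrow> real" where
  "fMMD2 T p \<pi> \<psi> M Y \<mu> = (\<Sum>i\<in>{1..M}. (1 / \<pi> i) * (innerH T p (\<lambda>t j. Y t j - \<mu> t j) (\<psi> i))^2)"

definition Xhat :: "(nat \<Rightarrow> real set) \<Rightarrow> nat \<Rightarrow> (nat \<times> nat) set \<Rightarrow> (real \<Rightarrow> nat \<Rightarrow> real) \<Rightarrow> (real \<Rightarrow> nat \<Rightarrow> real)
    \<Rightarrow> real \<Rightarrow> nat \<Rightarrow> real" where
  "Xhat Tsub d Q X \<mu> t j = (if \<exists>b\<in>{1..d}. t \<in> Tsub b \<and> (j, b) \<in> Q then X t j else \<mu> t j)"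

definition shapley :: "'a set \<Rightarrow> ('a set \<Rightarrow> real) \<Rightarrow> 'a \<Rightarrow> real" where
  "shapley N v q = (\<Sum>Q\<in>Pow (N - {q}).
     (fact (card Q) * fact (card N - card Q - 1) / fact (card N)) * (v (insert q Q) - v Q))"

definition (in prob_space) covariance :: "('a \<Rightarrow> real) \<Rightarrow> ('a \<Rightarrow> real) \<Rightarrow> real" where
  "covariance U V = expectation (\<lambda>w. (U w - expectation U) * (V w - expectation V))"

end

(*
  Cutting X back to \<mu> outside the cells of Q turns the score
  <X^Q - \<mu>, \<psi>_i> into the sum over the cells (j, b) in Q of
  z_i(j, b) = <X_j - \<mu>_j, \<psi>_{i,j}>_{T_b}, so that
  v(Q) = sum_i \<pi>_i^-1 (sum_{c in Q} z_i(c))^2 is a linear combination of squares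
  of additive games.  By linearity of the Shapley value it suffices that the Shapley
  value of Q |-> (sum_{c in Q} z(c))^2 at q is z(q) * sum_c z(c): the marginal
  contribution of q is z(q)^2 + 2 z(q) sum_{c in Q} z(c), the Shapley weights sum
  to 1, and every other player lies in the coalition joined by q with total weight 1/2.
  L^2-continuity is needed only to make \<mu> continuous, hence square integrable, so that
  all the integrals involved exist.
*)
theory Submission
  imports Defs
begin

definition shapley_weight :: "nat \<Rightarrow> nat \<Rightarrow> real" where
  "shapley_weight n s = fact s * fact (n - s - 1) / fact n"

lemma shapley_eq_weighted_sum:
  "shapley N v q = (\<Sum>Q\<in>Pow (N - {q}). shapley_weight (card N) (card Q) * (v (insert q Q) - v Q))"
  by (simp add: shapley_def shapley_weight_def)

lemma binomial_times_shapley_weight: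
  assumes "s \<le> m"
  shows "real (m choose s) * shapley_weight (Suc m) s = 1 / real (Suc m)"
  using assms by (simp add: shapley_weight_def binomial_fact field_simps del: of_nat_Suc)

lemma binomial_times_shapley_weight_Suc:
  assumes "s \<le> r"
  shows "real (r choose s) * shapley_weight (Suc (Suc r)) (Suc s)
       = real (Suc s) / (real (Suc r) * real (Suc (Suc r)))"
proof -
  have "real (Suc r) * real (r choose s) = real (Suc s) * real (Suc r choose Suc s)"
    by (metis Suc_times_binomial_eq mult.commute of_nat_mult)
  then have "real (r choose s) * shapley_weight (Suc (Suc r)) (Suc s)
      = real (Suc s) / real (Suc r) * (real (Suc r choose Suc s) * shapley_weight (Suc (Suc r)) (Suc s))"
    by (simp add: field_simps del: of_nat_Suc binomial_Suc_Suc)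
  also have "real (Suc r choose Suc s) * shapley_weight (Suc (Suc r)) (Suc s) = 1 / real (Suc (Suc r))"
    using assms by (simp add: binomial_times_shapley_weight del: binomial_Suc_Suc of_nat_Suc)
  finally show ?thesis by simp
qed

lemma sum_Pow_card:
  fixes g :: "nat \<Rightarrow> 'b::comm_semiring_1"
  assumes "finite A"
  shows "(\<Sum>R\<in>Pow A. g (card R)) = (\<Sum>s=0..card A. of_nat (card A choose s) * g s)"
proof -
  have "(\<Sum>R\<in>Pow A. g (card R)) = (\<Sum>s=0..card A. \<Sum>R\<in>{R\<in>Pow A. card R = s}. g (card R))"
    by (rule sum.group[symmetric]) (use assms in \<open>auto intro: card_mono\<close>)
  also have "\<dots> = (\<Sum>s=0..card A. of_nat (card A choose s) * g s)"
  proof (rule sum.cong[OF refl])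
    fix s
    have "{R\<in>Pow A. card R = s} = {R. R \<subseteq> A \<and> card R = s}" by auto
    then show "(\<Sum>R\<in>{R\<in>Pow A. card R = s}. g (card R)) = of_nat (card A choose s) * g s"
      using n_subsets[OF assms] by simp
  qed
  finally show ?thesis .
qed

lemma shapley_weights_sum:
  assumes "finite N" "q \<in> N"
  shows "(\<Sum>Q\<in>Pow (N - {q}). shapley_weight (card N) (card Q)) = 1"
proof -
  define m where "m = card (N - {q})"
  have card_N: "card N = Suc m"
    using assms unfolding m_def by (rule card.remove)
  have "(\<Sum>Q\<in>Pow (N - {q}). shapley_weight (card N) (card Q))
      = (\<Sum>s=0..m. real (m choose s) * shapley_weight (Suc m) s)"
    unfolding card_N m_def using assms(1) by (simp add: sum_Pow_card)
  also have "\<dots> = (\<Sum>s=0..m. 1 / real (Suc m))"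
    by (rule sum.cong) (simp_all add: binomial_times_shapley_weight)
  finally show ?thesis by simp
qed

(* In a uniformly random ordering of N, x precedes q with probability 1/2. *)
lemma shapley_weights_sum_containing:
  assumes "finite N" "q \<in> N" "x \<in> N" "x \<noteq> q"
  shows "(\<Sum>Q\<in>{Q\<in>Pow (N - {q}). x \<in> Q}. shapley_weight (card N) (card Q)) = 1 / 2"
proof -
  define B where "B = N - {q} - {x}"
  define r where "r = card B"
  have fin_B: "finite B" using assms(1) by (simp add: B_def)
  have card_N: "card N = Suc (Suc r)"
    using assms unfolding r_def B_def by (metis card.remove finite_Diff insert_Diff insert_iff)
  have containing: "{Q\<in>Pow (N - {q}). x \<in> Q} = insert x ` Pow B"
    using assms(3,4) unfolding B_def by (auto intro!: image_eqI[where x = "Q - {x}" for Q])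
  have inj: "inj_on (insert x) (Pow B)"
    unfolding B_def inj_on_def by blast
  have card_insert: "card (insert x R) = Suc (card R)" if "R \<in> Pow B" for R
  proof -
    have "finite R" "x \<notin> R" using that fin_B by (auto simp: B_def finite_subset)
    then show ?thesis by simp
  qed
  have "(\<Sum>Q\<in>{Q\<in>Pow (N - {q}). x \<in> Q}. shapley_weight (card N) (card Q))
      = (\<Sum>R\<in>Pow B. shapley_weight (Suc (Suc r)) (Suc (card R)))"
    unfolding containing card_N using inj card_insert by (simp add: sum.reindex)
  also have "\<dots> = (\<Sum>s=0..r. real (r choose s) * shapley_weight (Suc (Suc r)) (Suc s))"
    unfolding r_def using fin_B by (rule sum_Pow_card)
  also have "\<dots> = (\<Sum>s=0..r. real (Suc s) / (real (Suc r) * real (Suc (Suc r))))"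
    by (rule sum.cong) (simp_all add: binomial_times_shapley_weight_Suc del: of_nat_Suc)
  also have "\<dots> = 1 / 2"
  proof -
    have "2 * (\<Sum>s=0..r. real (Suc s)) = real (Suc r) * real (Suc (Suc r))"
      using double_gauss_sum[of r, where 'a = real] by (simp add: sum.distrib algebra_simps)
    then show ?thesis
      by (simp add: sum_divide_distrib[symmetric] field_simps del: of_nat_Suc)
  qed
  finally show ?thesis .
qed

lemma shapley_weighted_sum_additive:
  fixes z :: "'a \<Rightarrow> real"
  assumes "finite N" "q \<in> N"
  shows "(\<Sum>Q\<in>Pow (N - {q}). shapley_weight (card N) (card Q) * (\<Sum>x\<in>Q. z x))
       = (\<Sum>x\<in>N - {q}. z x) / 2"
proof -
  define A where "A = N - {q}"
  have fin_A: "finite A" using assms(1) by (simp add: A_def)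
  have "(\<Sum>Q\<in>Pow A. shapley_weight (card N) (card Q) * (\<Sum>x\<in>Q. z x))
      = (\<Sum>Q\<in>Pow A. \<Sum>x\<in>{x\<in>A. x \<in> Q}. shapley_weight (card N) (card Q) * z x)"
    by (rule sum.cong) (auto simp: sum_distrib_left intro!: sum.cong)
  also have "\<dots> = (\<Sum>x\<in>A. \<Sum>Q\<in>{Q\<in>Pow A. x \<in> Q}. shapley_weight (card N) (card Q) * z x)"
    using fin_A by (simp add: sum.swap_restrict)
  also have "\<dots> = (\<Sum>x\<in>A. z x / 2)"
    using assms shapley_weights_sum_containing[OF assms]
    by (intro sum.cong) (auto simp: A_def sum_distrib_right[symmetric])
  finally show ?thesis unfolding A_def by (simp add: sum_divide_distrib)
qed

lemma shapley_square_of_additive: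
  fixes z :: "'a \<Rightarrow> real"
  assumes "finite N" "q \<in> N"
  shows "shapley N (\<lambda>Q. (\<Sum>x\<in>Q. z x)\<^sup>2) q = z q * (\<Sum>x\<in>N. z x)"
proof -
  define w where "w Q = shapley_weight (card N) (card Q)" for Q :: "'a set"
  have marginal: "(\<Sum>x\<in>insert q Q. z x)\<^sup>2 - (\<Sum>x\<in>Q. z x)\<^sup>2 = (z q)\<^sup>2 + 2 * z q * (\<Sum>x\<in>Q. z x)"
    if "Q \<in> Pow (N - {q})" for Q
  proof -
    have "finite Q" "q \<notin> Q" using that assms(1) by (auto dest: finite_subset)
    then show ?thesis by (simp add: power2_eq_square algebra_simps)
  qed
  have "shapley N (\<lambda>Q. (\<Sum>x\<in>Q. z x)\<^sup>2) q
      = (\<Sum>Q\<in>Pow (N - {q}). w Q * (z q)\<^sup>2 + 2 * z q * (w Q * (\<Sum>x\<in>Q. z x)))"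
    unfolding shapley_eq_weighted_sum w_def by (rule sum.cong) (simp_all add: marginal algebra_simps)
  also have "\<dots> = (\<Sum>Q\<in>Pow (N - {q}). w Q) * (z q)\<^sup>2
      + 2 * z q * (\<Sum>Q\<in>Pow (N - {q}). w Q * (\<Sum>x\<in>Q. z x))"
    by (simp add: sum.distrib sum_distrib_left sum_distrib_right)
  also have "\<dots> = (z q)\<^sup>2 + z q * (\<Sum>x\<in>N - {q}. z x)"
    unfolding w_def shapley_weights_sum[OF assms] shapley_weighted_sum_additive[OF assms] by simp
  also have "\<dots> = z q * (\<Sum>x\<in>N. z x)"
    using assms by (simp add: sum.remove power2_eq_square algebra_simps)
  finally show ?thesis .
qed

lemma shapley_linear:
  "shapley N (\<lambda>Q. \<Sum>i\<in>I. c i * v i Q) q = (\<Sum>i\<in>I. c i * shapley N (v i) q)"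
  unfolding shapley_def
  by (simp add: sum_distrib_left sum_subtractf[symmetric] right_diff_distrib mult_ac sum.swap[of _ I])

lemma shapley_cong:
  assumes "\<And>Q. Q \<subseteq> N \<Longrightarrow> v Q = v' Q" "q \<in> N"
  shows "shapley N v q = shapley N v' q"
proof -
  have "v (insert q Q) = v' (insert q Q)" "v Q = v' Q" if "Q \<in> Pow (N - {q})" for Q
    using that by (auto intro!: assms(1) simp: assms(2))
  then show ?thesis unfolding shapley_def by (intro sum.cong) auto
qed

lemma set_integrable_mult_sqint:
  assumes "sqint A f" "sqint A g"
  shows "set_integrable lborel A (\<lambda>t. f t * g t)"
proof (rule set_integrable_bound[where f = "\<lambda>t. (f t)\<^sup>2 + (g t)\<^sup>2"])
  show "set_integrable lborel A (\<lambda>t. (f t)\<^sup>2 + (g t)\<^sup>2)"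
    using assms unfolding sqint_def by (intro set_integral_add(1)) auto
  have "(\<lambda>t. indicator A t *\<^sub>R (f t * g t)) = (\<lambda>t. (indicator A t *\<^sub>R f t) * (indicator A t *\<^sub>R g t))"
    by (auto simp: indicator_def)
  moreover have "(\<lambda>t. indicator A t *\<^sub>R f t) \<in> borel_measurable lborel"
    "(\<lambda>t. indicator A t *\<^sub>R g t) \<in> borel_measurable lborel"
    using assms unfolding sqint_def set_borel_measurable_def by auto
  ultimately show "set_borel_measurable lborel A (\<lambda>t. f t * g t)"
    unfolding set_borel_measurable_def by (simp only: borel_measurable_times)
  show "AE t in lborel. t \<in> A \<longrightarrow> norm (f t * g t) \<le> norm ((f t)\<^sup>2 + (g t)\<^sup>2)"
  proof (rule AE_I2, rule impI)
    fix t
    have "2 * \<bar>f t\<bar> * \<bar>g t\<bar> \<le> (f t)\<^sup>2 + (g t)\<^sup>2"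
      using sum_squares_bound[of "\<bar>f t\<bar>" "\<bar>g t\<bar>"] by simp
    moreover have "0 \<le> \<bar>f t\<bar> * \<bar>g t\<bar>" by simp
    ultimately have "\<bar>f t\<bar> * \<bar>g t\<bar> \<le> (f t)\<^sup>2 + (g t)\<^sup>2" by linarith
    then show "norm (f t * g t) \<le> norm ((f t)\<^sup>2 + (g t)\<^sup>2)"
      by (simp add: abs_mult)
  qed
qed

lemma sqint_continuous_on_interval:
  assumes "continuous_on {lo..hi} f"
  shows "sqint {lo..hi} f"
  unfolding sqint_def set_borel_measurable_def
proof
  show "(\<lambda>t. indicator {lo..hi} t *\<^sub>R f t) \<in> borel_measurable lborel"
    using borel_measurable_continuous_on_indicator[OF _ assms] by simp
  show "set_integrable lborel {lo..hi} (\<lambda>t. (f t)\<^sup>2)"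
    by (rule borel_integrable_atLeastAtMost') (intro continuous_intros assms)
qed

lemma integrable_square_diff:
  fixes f g :: "'a \<Rightarrow> real"
  assumes "f \<in> borel_measurable M" "g \<in> borel_measurable M"
    and "integrable M (\<lambda>x. (f x)\<^sup>2)" "integrable M (\<lambda>x. (g x)\<^sup>2)"
  shows "integrable M (\<lambda>x. (f x - g x)\<^sup>2)"
proof (rule Bochner_Integration.integrable_bound)
  show "integrable M (\<lambda>x. 2 * (f x)\<^sup>2 + 2 * (g x)\<^sup>2)"
    using assms by simp
  show "(\<lambda>x. (f x - g x)\<^sup>2) \<in> borel_measurable M"
    using assms by (intro borel_measurable_power borel_measurable_diff)
  show "AE x in M. norm ((f x - g x)\<^sup>2) \<le> norm (2 * (f x)\<^sup>2 + 2 * (g x)\<^sup>2)"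
  proof (rule AE_I2)
    fix x
    have "(f x - g x)\<^sup>2 \<le> 2 * (f x)\<^sup>2 + 2 * (g x)\<^sup>2"
      using zero_le_power2[of "f x + g x"] by (simp add: power2_diff power2_sum)
    then show "norm ((f x - g x)\<^sup>2) \<le> norm (2 * (f x)\<^sup>2 + 2 * (g x)\<^sup>2)"
      by simp
  qed
qed

lemma (in prob_space) square_expectation_le:
  fixes Y :: "'a \<Rightarrow> real"
  assumes "Y \<in> borel_measurable M" "integrable M (\<lambda>x. (Y x)\<^sup>2)"
  shows "(expectation Y)\<^sup>2 \<le> expectation (\<lambda>x. (Y x)\<^sup>2)"
proof -
  have "integrable M Y" using assms by (rule square_integrable_imp_integrable)
  then have "variance Y = expectation (\<lambda>x. (Y x)\<^sup>2) - (expectation Y)\<^sup>2"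
    using assms(2) by (rule variance_eq)
  with variance_positive[of Y] show ?thesis by simp
qed

lemma (in prob_space) continuous_on_expectation_L2:
  fixes Z :: "'i::topological_space \<Rightarrow> 'a \<Rightarrow> real"
  assumes meas: "\<And>t. t \<in> T \<Longrightarrow> Z t \<in> borel_measurable M"
    and square_int: "\<And>t. t \<in> T \<Longrightarrow> integrable M (\<lambda>x. (Z t x)\<^sup>2)"
    and L2_cont: "\<And>t. t \<in> T \<Longrightarrow> ((\<lambda>s. expectation (\<lambda>x. (Z s x - Z t x)\<^sup>2)) \<longlongrightarrow> 0) (at t within T)"
  shows "continuous_on T (\<lambda>t. expectation (Z t))"
  unfolding continuous_on_def
proof
  fix t assume t: "t \<in> T"
  have bound: "norm (expectation (Z s) - expectation (Z t)) \<le> sqrt (expectation (\<lambda>x. (Z s x - Z t x)\<^sup>2))"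
    if s: "s \<in> T" for s
  proof -
    have "integrable M (Z s)" "integrable M (Z t)"
      using s t meas square_int by (auto intro: square_integrable_imp_integrable)
    then have "norm (expectation (Z s) - expectation (Z t)) = sqrt ((expectation (\<lambda>x. Z s x - Z t x))\<^sup>2)"
      by simp
    also have "\<dots> \<le> sqrt (expectation (\<lambda>x. (Z s x - Z t x)\<^sup>2))"
      using s t meas square_int
      by (intro real_sqrt_le_mono square_expectation_le integrable_square_diff borel_measurable_diff) auto
    finally show ?thesis .
  qed
  have "((\<lambda>s. sqrt (expectation (\<lambda>x. (Z s x - Z t x)\<^sup>2))) \<longlongrightarrow> 0) (at t within T)"
    using tendsto_real_sqrt[OF L2_cont[OF t]] by simp
  moreover have "\<forall>\<^sub>F s in at t within T.
      norm (expectation (Z s) - expectation (Z t)) \<le> sqrt (expectation (\<lambda>x. (Z s x - Z t x)\<^sup>2))"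
    unfolding eventually_at_filter using bound by (intro always_eventually) auto
  ultimately have "((\<lambda>s. expectation (Z s) - expectation (Z t)) \<longlongrightarrow> 0) (at t within T)"
    by (rule Lim_null_comparison[rotated])
  then show "((\<lambda>s. expectation (Z s)) \<longlongrightarrow> expectation (Z t)) (at t within T)"
    by (rule LIM_zero_cancel)
qed

lemma (in prob_space) sqint_mean_of_L2_continuous:
  fixes Z :: "real \<Rightarrow> 'a \<Rightarrow> real"
  assumes "\<And>t. t \<in> {lo..hi} \<Longrightarrow> Z t \<in> borel_measurable M"
    and "\<And>t. t \<in> {lo..hi} \<Longrightarrow> integrable M (\<lambda>x. (Z t x)\<^sup>2)"
    and "\<And>t. t \<in> {lo..hi} \<Longrightarrow>
           ((\<lambda>s. expectation (\<lambda>x. (Z s x - Z t x)\<^sup>2)) \<longlongrightarrow> 0) (at t within {lo..hi})"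
    and mean: "\<And>t. t \<in> {lo..hi} \<Longrightarrow> m t = expectation (Z t)"
  shows "sqint {lo..hi} m"
proof (rule sqint_continuous_on_interval)
  have "continuous_on {lo..hi} (\<lambda>t. expectation (Z t))"
    using assms(1-3) by (rule continuous_on_expectation_L2)
  moreover have "continuous_on {lo..hi} m = continuous_on {lo..hi} (\<lambda>t. expectation (Z t))"
    using mean by (rule continuous_on_cong[OF refl])
  ultimately show "continuous_on {lo..hi} m" by simp
qed

lemma innerH_Xhat_eq_sum_cells:
  fixes Y m \<phi> :: "real \<Rightarrow> nat \<Rightarrow> real"
  assumes sets: "\<And>b. b \<in> {1..d} \<Longrightarrow> Tsub b \<in> sets lborel"
    and sub: "\<And>b. b \<in> {1..d} \<Longrightarrow> Tsub b \<subseteq> T"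
    and disj: "disjoint_family_on Tsub {1..d}"
    and int: "\<And>j. j \<in> {1..p} \<Longrightarrow> set_integrable lborel T (\<lambda>t. (Y t j - m t j) * \<phi> t j)"
    and Q: "Q \<subseteq> {1..p} \<times> {1..d}"
  shows "innerH T p (\<lambda>t j. Xhat Tsub d Q Y m t j - m t j) \<phi>
       = (\<Sum>(j, b)\<in>Q. innerS (Tsub b) (\<lambda>t. Y t j - m t j) (\<lambda>t. \<phi> t j))"
proof -
  define B where "B j = {b\<in>{1..d}. (j, b) \<in> Q}" for j
  have coordinate: "(LINT t:T|lborel. (Xhat Tsub d Q Y m t j - m t j) * \<phi> t j)
      = (\<Sum>b\<in>B j. innerS (Tsub b) (\<lambda>t. Y t j - m t j) (\<lambda>t. \<phi> t j))"
    if j: "j \<in> {1..p}" for j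
  proof -
    have "(LINT t:T|lborel. (Xhat Tsub d Q Y m t j - m t j) * \<phi> t j)
        = (LINT t:(\<Union>b\<in>B j. Tsub b)|lborel. (Y t j - m t j) * \<phi> t j)"
      unfolding set_lebesgue_integral_def using sub
      by (intro Bochner_Integration.integral_cong) (auto simp: Xhat_def B_def indicator_def)
    also have "\<dots> = (\<Sum>b\<in>B j. LINT t:Tsub b|lborel. (Y t j - m t j) * \<phi> t j)"
    proof (rule set_integral_finite_Union)
      show "disjoint_family_on Tsub (B j)"
        using disj by (rule disjoint_family_on_mono[rotated]) (auto simp: B_def)
      fix b assume "b \<in> B j"
      then have b: "b \<in> {1..d}" by (simp add: B_def)
      show "Tsub b \<in> sets lborel" using sets[OF b] .
      show "set_integrable lborel (Tsub b) (\<lambda>t. (Y t j - m t j) * \<phi> t j)"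
        using int[OF j] sets[OF b] sub[OF b] by (rule set_integrable_subset)
    qed (simp add: B_def)
    finally show ?thesis by (simp add: innerS_def)
  qed
  have "innerH T p (\<lambda>t j. Xhat Tsub d Q Y m t j - m t j) \<phi>
      = (\<Sum>j\<in>{1..p}. \<Sum>b\<in>B j. innerS (Tsub b) (\<lambda>t. Y t j - m t j) (\<lambda>t. \<phi> t j))"
    unfolding innerH_def by (rule sum.cong) (simp_all add: coordinate)
  also have "\<dots> = (\<Sum>(j, b)\<in>Sigma {1..p} B. innerS (Tsub b) (\<lambda>t. Y t j - m t j) (\<lambda>t. \<phi> t j))"
    by (rule sum.Sigma) (simp_all add: B_def)
  also have "Sigma {1..p} B = Q"
    using Q by (auto simp: B_def)
  finally show ?thesis .
qed

lemma innerH_eq_sum_cells: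
  fixes Y m \<phi> :: "real \<Rightarrow> nat \<Rightarrow> real" and Tsub :: "nat \<Rightarrow> real set"
  assumes sets: "\<And>b. b \<in> {1..d} \<Longrightarrow> Tsub b \<in> sets lborel"
    and disj: "disjoint_family_on Tsub {1..d}"
    and union: "(\<Union>b\<in>{1..d}. Tsub b) = T"
    and int: "\<And>j. j \<in> {1..p} \<Longrightarrow> set_integrable lborel T (\<lambda>t. (Y t j - m t j) * \<phi> t j)"
  shows "innerH T p (\<lambda>t j. Y t j - m t j) \<phi>
       = (\<Sum>(j, b)\<in>{1..p} \<times> {1..d}. innerS (Tsub b) (\<lambda>t. Y t j - m t j) (\<lambda>t. \<phi> t j))"
proof -
  have "innerH T p (\<lambda>t j. Y t j - m t j) \<phi>
      = innerH T p (\<lambda>t j. Xhat Tsub d ({1..p} \<times> {1..d}) Y m t j - m t j) \<phi>"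
    unfolding innerH_def set_lebesgue_integral_def using union
    by (intro sum.cong Bochner_Integration.integral_cong) (auto simp: Xhat_def indicator_def)
  also have "\<dots> = (\<Sum>(j, b)\<in>{1..p} \<times> {1..d}. innerS (Tsub b) (\<lambda>t. Y t j - m t j) (\<lambda>t. \<phi> t j))"
    using union by (intro innerH_Xhat_eq_sum_cells sets disj int) auto
  finally show ?thesis .
qed

theorem proposition2:
  fixes P :: "'w measure"
    and X :: "'w \<Rightarrow> real \<Rightarrow> nat \<Rightarrow> real"
    and \<mu> :: "real \<Rightarrow> nat \<Rightarrow> real"
    and K :: "real \<Rightarrow> real \<Rightarrow> nat \<Rightarrow> nat \<Rightarrow> real"
    and lo hi :: real and p d M k a :: nat
    and Tsub :: "nat \<Rightarrow> real set"
    and \<pi> :: "nat \<Rightarrow> real" and \<psi> :: "nat \<Rightarrow> real \<Rightarrow> nat \<Rightarrow> real"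
    and \<omega> :: 'w
  defines "T \<equiv> {lo..hi}"
  assumes P: "prob_space P"
    and p: "p \<ge> 1" and d: "d \<ge> 1" and M: "M \<ge> 1"
    and lohi: "lo \<le> hi"
    (* partition of T into pairwise disjoint subintervals *)
    and Tsub_int: "\<forall>b\<in>{1..d}. is_interval (Tsub b)"
    and Tsub_disj: "\<forall>b\<in>{1..d}. \<forall>c\<in>{1..d}. b \<noteq> c \<longrightarrow> Tsub b \<inter> Tsub c = {}"
    and Tsub_union: "(\<Union>b\<in>{1..d}. Tsub b) = T"
    (* X is a p-variate second-order process with mean mu and covariance kernel K *)
    and X_rv: "\<forall>t\<in>T. \<forall>j\<in>{1..p}. (\<lambda>w. X w t j) \<in> borel_measurable P"
    and X_L2: "\<forall>t\<in>T. \<forall>j\<in>{1..p}. integrable P (\<lambda>w. (X w t j)^2)"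
    and mean: "\<forall>t\<in>T. \<forall>j\<in>{1..p}. \<mu> t j = prob_space.expectation P (\<lambda>w. X w t j)"
    and cov: "\<forall>s\<in>T. \<forall>t\<in>T. \<forall>i\<in>{1..p}. \<forall>j\<in>{1..p}.
                K s t i j = prob_space.covariance P (\<lambda>w. X w s i) (\<lambda>w. X w t j)"
    (* L^2-continuity *)
    and L2cont: "\<forall>t\<in>T. \<forall>j\<in>{1..p}.
       ((\<lambda>s. prob_space.expectation P (\<lambda>w. (X w s j - X w t j)^2)) \<longlongrightarrow> 0) (at t within T)"
    (* sample paths lie in H = L^2(T)^p *)
    and paths: "\<forall>w\<in>space P. inH T p (X w)"
    (* (pi_i, psi_i), i = 1..M: the M largest eigenpairs of the covariance operator *)
    and psi_H: "\<forall>i\<in>{1..M}. inH T p (\<psi> i)"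
    and psi_orth: "\<forall>i\<in>{1..M}. \<forall>l\<in>{1..M}. innerH T p (\<psi> i) (\<psi> l) = (if i = l then 1 else 0)"
    and eigen: "\<forall>i\<in>{1..M}. \<forall>s\<in>T. \<forall>j\<in>{1..p}. covop T p K (\<psi> i) s j = \<pi> i * \<psi> i s j"
    and pi_noninc: "\<forall>i\<in>{1..<M}. \<pi> (Suc i) \<le> \<pi> i"
    and largest: "\<forall>lam \<phi>. inH T p \<phi> \<and> innerH T p \<phi> \<phi> > 0
        \<and> (\<forall>s\<in>T. \<forall>j\<in>{1..p}. covop T p K \<phi> s j = lam * \<phi> s j)
        \<and> (\<forall>i\<in>{1..M}. innerH T p \<phi> (\<psi> i) = 0) \<longrightarrow> lam \<le> \<pi> M"
    and piM: "\<pi> M > 0"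
    and \<omega>: "\<omega> \<in> space P"
    and k: "k \<in> {1..p}" and a: "a \<in> {1..d}"
  shows "shapley ({1..p} \<times> {1..d})
            (\<lambda>Q. fMMD2 T p \<pi> \<psi> M (Xhat Tsub d Q (X \<omega>) \<mu>) \<mu>) (k, a)
         = (\<Sum>i\<in>{1..M}. (1 / \<pi> i)
              * innerS (Tsub a) (\<lambda>t. X \<omega> t k - \<mu> t k) (\<lambda>t. \<psi> i t k)
              * innerH T p (\<lambda>t j. X \<omega> t j - \<mu> t j) (\<psi> i))"
proof -
  interpret prob_space P by (rule P)
  define N where "N = {1..p} \<times> {1..d}"
  define z where "z i = (\<lambda>(j, b). innerS (Tsub b) (\<lambda>t. X \<omega> t j - \<mu> t j) (\<lambda>t. \<psi> i t j))" for i
  have sets: "Tsub b \<in> sets lborel" if "b \<in> {1..d}" for b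
    using Tsub_int that real_interval_borel_measurable by simp
  have disj: "disjoint_family_on Tsub {1..d}"
    using Tsub_disj by (auto simp: disjoint_family_on_def)
  have mean_sqint: "sqint T (\<lambda>t. \<mu> t j)" if "j \<in> {1..p}" for j
    unfolding T_def using X_rv X_L2 L2cont mean that
    by (intro sqint_mean_of_L2_continuous[where Z = "\<lambda>t w. X w t j"]) (auto simp: T_def)
  have int: "set_integrable lborel T (\<lambda>t. (X \<omega> t j - \<mu> t j) * \<psi> i t j)"
    if "i \<in> {1..M}" "j \<in> {1..p}" for i j
    using paths \<omega> psi_H mean_sqint that unfolding inH_def left_diff_distrib
    by (intro set_integral_diff(1) set_integrable_mult_sqint) auto
  have score: "innerH T p (\<lambda>t j. Xhat Tsub d Q (X \<omega>) \<mu> t j - \<mu> t j) (\<psi> i) = (\<Sum>c\<in>Q. z i c)"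
    if "Q \<subseteq> N" "i \<in> {1..M}" for Q i
    unfolding z_def using that Tsub_union by (intro innerH_Xhat_eq_sum_cells sets disj int) (auto simp: N_def)
  have score_all: "innerH T p (\<lambda>t j. X \<omega> t j - \<mu> t j) (\<psi> i) = (\<Sum>c\<in>N. z i c)"
    if "i \<in> {1..M}" for i
    unfolding z_def N_def using that Tsub_union by (intro innerH_eq_sum_cells sets disj int) auto
  have "shapley N (\<lambda>Q. fMMD2 T p \<pi> \<psi> M (Xhat Tsub d Q (X \<omega>) \<mu>) \<mu>) (k, a)
      = shapley N (\<lambda>Q. \<Sum>i\<in>{1..M}. 1 / \<pi> i * (\<Sum>c\<in>Q. z i c)\<^sup>2) (k, a)"
    using score k a by (intro shapley_cong) (auto simp: N_def fMMD2_def intro!: sum.cong)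
  also have "\<dots> = (\<Sum>i\<in>{1..M}. 1 / \<pi> i * (z i (k, a) * (\<Sum>c\<in>N. z i c)))"
    unfolding shapley_linear using k a by (simp add: shapley_square_of_additive N_def)
  also have "\<dots> = (\<Sum>i\<in>{1..M}. 1 / \<pi> i
              * innerS (Tsub a) (\<lambda>t. X \<omega> t k - \<mu> t k) (\<lambda>t. \<psi> i t k)
              * innerH T p (\<lambda>t j. X \<omega> t j - \<mu> t j) (\<psi> i))"
    using score_all by (intro sum.cong refl) (simp add: z_def)
  finally show ?thesis unfolding N_def .
qed

end
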